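(* Let $G$ and $H$ be connected graphs, each with at least $2$ vertices. The direct product $G\times H$ is $1$-perfectly orientable if and only if one of the following holds: (i) $G\cong K_2$ and $H$ is a pseudotree, or vice versa; (ii) $G\cong P_3$ and $H\cong P_4$, or vice versa; (iii) $G\cong H\cong P_3$.
   Context: All graphs are finite and simple. An orientation of a graph $G$ is $1$-perfect if the out-neighborhood of every vertex induces a clique in $G$; $G$ is $1$-perfectly orientable if it admits a $1$-perfect orientation. The direct product $G\times H$ has vertex set $V(G)\times V(H)$, with $(u,v),(u',v')$ adjacent iff $uu'\in E(G)$ and $vv'\in E(H)$. A pseudotree is a connected graph containing at most one cycle. $P_n$ denotes the path on $n$ vertices. *)

theory Defs
  imports Main
begin

definition graph :: "'a set \<Rightarrow> ('a \<Rightarrow> 'a \<Rightarrow> bool) \<Rightarrow> bool" where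
  "graph V E \<longleftrightarrow> finite V \<and> (\<forall>x y. E x y \<longrightarrow> x \<in> V \<and> y \<in> V)
     \<and> (\<forall>x y. E x y \<longrightarrow> E y x) \<and> (\<forall>x. \<not> E x x)"

definition connected_graph :: "'a set \<Rightarrow> ('a \<Rightarrow> 'a \<Rightarrow> bool) \<Rightarrow> bool" where
  "connected_graph V E \<longleftrightarrow> (\<forall>x\<in>V. \<forall>y\<in>V. E\<^sup>*\<^sup>* x y)"

text \<open>An orientation: each edge gets exactly one direction; D x y means arc x \<rightarrow> y.\<close>
definition orientation :: "'a set \<Rightarrow> ('a \<Rightarrow> 'a \<Rightarrow> bool) \<Rightarrow> ('a \<Rightarrow> 'a \<Rightarrow> bool) \<Rightarrow> bool" where
  "orientation V E D \<longleftrightarrow> (\<forall>x y. D x y \<longrightarrow> E x y) \<and>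
     (\<forall>x y. E x y \<longrightarrow> (D x y \<longleftrightarrow> \<not> D y x))"

definition one_perfect :: "'a set \<Rightarrow> ('a \<Rightarrow> 'a \<Rightarrow> bool) \<Rightarrow> ('a \<Rightarrow> 'a \<Rightarrow> bool) \<Rightarrow> bool" where
  "one_perfect V E D \<longleftrightarrow> orientation V E D \<and>
     (\<forall>v\<in>V. \<forall>x y. D v x \<and> D v y \<and> x \<noteq> y \<longrightarrow> E x y)"

definition one_perfectly_orientable :: "'a set \<Rightarrow> ('a \<Rightarrow> 'a \<Rightarrow> bool) \<Rightarrow> bool" where
  "one_perfectly_orientable V E \<longleftrightarrow> (\<exists>D. one_perfect V E D)"

definition dprod_V :: "'a set \<Rightarrow> 'b set \<Rightarrow> ('a \<times> 'b) set" where
  "dprod_V V1 V2 = V1 \<times> V2"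

definition dprod_E :: "('a \<Rightarrow> 'a \<Rightarrow> bool) \<Rightarrow> ('b \<Rightarrow> 'b \<Rightarrow> bool) \<Rightarrow> ('a \<times> 'b) \<Rightarrow> ('a \<times> 'b) \<Rightarrow> bool" where
  "dprod_E E1 E2 p q \<longleftrightarrow> E1 (fst p) (fst q) \<and> E2 (snd p) (snd q)"

definition graph_iso :: "'a set \<Rightarrow> ('a \<Rightarrow> 'a \<Rightarrow> bool) \<Rightarrow> 'b set \<Rightarrow> ('b \<Rightarrow> 'b \<Rightarrow> bool) \<Rightarrow> bool" where
  "graph_iso V1 E1 V2 E2 \<longleftrightarrow> (\<exists>f. bij_betw f V1 V2 \<and>
     (\<forall>x\<in>V1. \<forall>y\<in>V1. E1 x y \<longleftrightarrow> E2 (f x) (f y)))"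

definition path_V :: "nat \<Rightarrow> nat set" where
  "path_V n = {0..<n}"

definition path_E :: "nat \<Rightarrow> nat \<Rightarrow> nat \<Rightarrow> bool" where
  "path_E n i j \<longleftrightarrow> i < n \<and> j < n \<and> (i + 1 = j \<or> j + 1 = i)"

definition K2_V :: "nat set" where "K2_V = {0, 1}"
definition K2_E :: "nat \<Rightarrow> nat \<Rightarrow> bool" where
  "K2_E i j \<longleftrightarrow> i \<in> K2_V \<and> j \<in> K2_V \<and> i \<noteq> j"

text \<open>A cycle is given by a list of k \<ge> 3 distinct vertices, consecutive ones
  (cyclically) adjacent; it is identified with its edge set.\<close>
definition is_cycle :: "('a \<Rightarrow> 'a \<Rightarrow> bool) \<Rightarrow> 'a list \<Rightarrow> bool" where
  "is_cycle E c \<longleftrightarrow> length c \<ge> 3 \<and> distinct c \<and>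
     (\<forall>i < length c. E (c ! i) (c ! ((i + 1) mod length c)))"

definition cycle_edges :: "'a list \<Rightarrow> 'a set set" where
  "cycle_edges c = {{c ! i, c ! ((i + 1) mod length c)} | i. i < length c}"

definition pseudotree :: "'a set \<Rightarrow> ('a \<Rightarrow> 'a \<Rightarrow> bool) \<Rightarrow> bool" where
  "pseudotree V E \<longleftrightarrow> connected_graph V E \<and>
     (\<forall>c1 c2. is_cycle E c1 \<and> is_cycle E c2 \<longrightarrow> cycle_edges c1 = cycle_edges c2)"

end

(*
  In a 1-perfect orientation out-neighbourhoods are cliques, so inside a triangle-free vertex set
  every vertex has at most one out-neighbour, and such a set spans at most as many edges as it has
  vertices. The direct product G \<times> H has |V(G)| |V(H)| vertices and 2 |E(G)| |E(H)| edges.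

  If G = K2 the product is triangle-free, which gives |E(H)| \<le> |V(H)|, i.e. H is a pseudotree;
  conversely an orientation of a pseudotree with all out-degrees at most 1 lifts to K2 \<times> H.
  If 3 \<le> |V(G)| \<le> |V(H)|, the factors cannot both contain triangles (the product would contain
  a triangular prism, which is not 1-perfectly orientable), so the product is triangle-free.
  Together with |E| \<ge> |V| - 1 for connected graphs the edge count then leaves only G = P3 and
  H a connected graph with 3 vertices and 2 edges or with 4 vertices and 3 edges. Counting
  edges around the middle vertex of G shows that H has maximum degree 2, so H is P3 or P4, and
  explicit orientations of P3 \<times> P3 and P3 \<times> P4 finish the proof.
*)

theory Submission
  imports Defs "HOL-Combinatorics.Orbits"
begin

section \<open>Counting arcs\<close>

abbreviation arcs :: "('a \<Rightarrow> 'a \<Rightarrow> bool) \<Rightarrow> ('a \<times> 'a) set" where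
  "arcs E \<equiv> {(x, y). E x y}"

lemma
  assumes "graph V E"
  shows graph_finite: "finite V"
    and graph_edgeD: "E x y \<Longrightarrow> x \<in> V \<and> y \<in> V"
    and graph_sym: "E x y \<Longrightarrow> E y x"
    and graph_irrefl: "\<not> E x x"
  using assms unfolding graph_def by auto

lemma finite_arcs: "graph V E \<Longrightarrow> finite (arcs E)"
  by (rule finite_subset[of _ "V \<times> V"]) (auto dest: graph_edgeD simp: graph_finite)

lemma finite_neighbours: "graph V E \<Longrightarrow> finite {w. E v w}"
  by (rule finite_subset[OF _ graph_finite]) (auto dest: graph_edgeD)

lemma finite_arcs_within: "finite S \<Longrightarrow> finite {(x, y). x \<in> S \<and> y \<in> S \<and> E x y}"
  by (rule finite_subset[of _ "S \<times> S"]) auto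

lemma card_arcs_eq_sum_degree:
  assumes "graph V E"
  shows "card (arcs E) = (\<Sum>v\<in>V. card {w. E v w})"
proof -
  have "arcs E = Sigma V (\<lambda>v. {w. E v w})"
    using graph_edgeD[OF assms] by auto
  then show ?thesis
    using graph_finite[OF assms] finite_neighbours[OF assms] by simp
qed

text \<open>Every vertex other than a root r has a neighbour strictly closer to r; the
  pairs (v, parent v) and (parent v, v) are 2(|V| - 1) distinct arcs.\<close>
lemma card_arcs_ge_if_connected:
  assumes g: "graph V E" and c: "connected_graph V E" and "V \<noteq> {}"
  shows "2 * (card V - 1) \<le> card (arcs E)"
proof -
  obtain r where r: "r \<in> V" using \<open>V \<noteq> {}\<close> by blast
  define dist where "dist v = (LEAST k. (E ^^ k) r v)" for v
  have closer: "\<exists>w. E w v \<and> dist w < dist v" if v: "v \<in> V" "v \<noteq> r" for v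
  proof -
    have "\<exists>k. (E ^^ k) r v"
      using c r v(1) unfolding connected_graph_def by (metis rtranclp_power)
    then have walk: "(E ^^ dist v) r v"
      unfolding dist_def by (rule LeastI_ex)
    then have "dist v \<noteq> 0"
      using v(2) by (metis relpowp.simps(1))
    then obtain m w where m: "dist v = Suc m" "(E ^^ m) r w" "E w v"
      using walk by (metis not0_implies_Suc relpowp_Suc_E)
    then have "dist w \<le> m"
      unfolding dist_def by (metis Least_le)
    with m show ?thesis by auto
  qed
  define parent where "parent v = (SOME w. E w v \<and> dist w < dist v)" for v
  have parent: "E (parent v) v \<and> dist (parent v) < dist v" if "v \<in> V - {r}" for v
    unfolding parent_def by (rule someI_ex) (use closer that in blast)
  let ?S = "V - {r}"
  have disjoint: "(\<lambda>v. (v, parent v)) ` ?S \<inter> (\<lambda>v. (parent v, v)) ` ?S = {}"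
  proof -
    have "(v, parent v) \<noteq> (parent w, w)" if "v \<in> ?S" "w \<in> ?S" for v w
      using parent[OF that(1)] parent[OF that(2)] by auto
    then show ?thesis by blast
  qed
  have "2 * (card V - 1) = card ((\<lambda>v. (v, parent v)) ` ?S) + card ((\<lambda>v. (parent v, v)) ` ?S)"
    using r graph_finite[OF g] by (simp add: card_image inj_on_def)
  also have "\<dots> = card ((\<lambda>v. (v, parent v)) ` ?S \<union> (\<lambda>v. (parent v, v)) ` ?S)"
    using disjoint graph_finite[OF g] by (simp add: card_Un_disjoint)
  also have "\<dots> \<le> card (arcs E)"
    by (rule card_mono[OF finite_arcs[OF g]]) (use parent graph_sym[OF g] in auto)
  finally show ?thesis .
qed

definition triangle_free_on :: "'a set \<Rightarrow> ('a \<Rightarrow> 'a \<Rightarrow> bool) \<Rightarrow> bool" where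
  "triangle_free_on S E \<longleftrightarrow> (\<forall>x\<in>S. \<forall>y\<in>S. \<forall>z\<in>S. \<not> (E x y \<and> E y z \<and> E x z))"

lemma neighbour_unique_if_card_le_2:
  assumes g: "graph V E" and "card V \<le> 2" "E v x" "E v y"
  shows "x = y"
proof (rule ccontr)
  assume "x \<noteq> y"
  moreover have "v \<noteq> x" "v \<noteq> y"
    using assms(3,4) graph_irrefl[OF g] by metis+
  ultimately have "card {v, x, y} = 3" by simp
  moreover have "{v, x, y} \<subseteq> V"
    using assms(3,4) graph_edgeD[OF g] by auto
  ultimately show False
    using assms(2) card_mono[OF graph_finite[OF g], of "{v, x, y}"] by simp
qed

lemma triangle_free_on_if_card_le_2:
  assumes "graph V E" "card V \<le> 2"
  shows "triangle_free_on S E"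
proof -
  have False if "E x y" "E y z" "E x z" for x y z
    using neighbour_unique_if_card_le_2[OF assms that(1,3)] that(2) graph_irrefl[OF assms(1)] by simp
  then show ?thesis unfolding triangle_free_on_def by blast
qed

text \<open>Inside a triangle-free set the out-neighbourhood of a vertex, being a clique, has at most
  one element, so the arcs within S injectively map to their tails.\<close>
lemma card_arcs_within_le_if_one_perfect:
  assumes g: "graph V E" and D: "one_perfect V E D" and "S \<subseteq> V" and tf: "triangle_free_on S E"
  shows "card {(x, y). x \<in> S \<and> y \<in> S \<and> E x y} \<le> 2 * card S"
proof -
  have finS: "finite S" using graph_finite[OF g] \<open>S \<subseteq> V\<close> by (rule finite_subset[rotated])
  define A where "A = {(x, y). x \<in> S \<and> y \<in> S \<and> D x y}"
  have finA: "finite A" unfolding A_def by (rule finite_arcs_within[OF finS])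
  have DE: "D x y \<Longrightarrow> E x y" and orient: "E x y \<Longrightarrow> D x y \<longleftrightarrow> \<not> D y x"
    and clique: "v \<in> V \<Longrightarrow> D v x \<Longrightarrow> D v y \<Longrightarrow> x \<noteq> y \<Longrightarrow> E x y" for v x y
    using D unfolding one_perfect_def orientation_def by blast+
  have "inj_on fst A"
  proof (rule inj_onI)
    fix a b assume "a \<in> A" "b \<in> A" "fst a = fst b"
    then obtain x y z where "a = (x, y)" "b = (x, z)" "x \<in> S" "y \<in> S" "z \<in> S" "D x y" "D x z"
      unfolding A_def by auto
    then show "a = b"
      using tf clique[of x y z] DE \<open>S \<subseteq> V\<close> unfolding triangle_free_on_def by blast
  qed
  then have "card A \<le> card S"
    using card_inj_on_le[of fst A S] finS unfolding A_def by force
  have "card {(x, y). x \<in> S \<and> y \<in> S \<and> E x y} \<le> card (A \<union> converse A)"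
    by (rule card_mono) (use finA orient in \<open>auto simp: A_def\<close>)
  also have "\<dots> \<le> 2 * card A"
    using card_Un_le[of A "converse A"] by (simp add: card_inverse)
  finally show ?thesis using \<open>card A \<le> card S\<close> by linarith
qed

lemma card_arcs_le_if_one_perfect:
  assumes "graph V E" "one_perfect V E D" "triangle_free_on V E"
  shows "card (arcs E) \<le> 2 * card V"
proof -
  have "arcs E = {(x, y). x \<in> V \<and> y \<in> V \<and> E x y}"
    using graph_edgeD[OF assms(1)] by auto
  then show ?thesis
    using card_arcs_within_le_if_one_perfect[OF assms(1,2) order_refl assms(3)] by simp
qed

section \<open>Orientations with out-degree at most one\<close>

lemma one_perfect_if_right_unique:
  "orientation V E D \<Longrightarrow> right_unique D \<Longrightarrow> one_perfect V E D"
  unfolding one_perfect_def right_unique_def by blast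

lemma orientation_arcD: "orientation V E D \<Longrightarrow> D x y \<Longrightarrow> E x y"
  unfolding orientation_def by blast

lemma orientation_antisym: "orientation V E D \<Longrightarrow> D x y \<Longrightarrow> \<not> D y x"
  unfolding orientation_def by blast

text \<open>In a right-unique digraph the walk leaving z is the orbit of a successor function.\<close>
lemma right_unique_closed_walk_periodic:
  assumes "right_unique D" "D\<^sup>+\<^sup>+ z z"
  obtains s k where "0 < k" "(s ^^ k) z = z" "inj_on (\<lambda>i. (s ^^ i) z) {0..<k}"
    "\<And>i. D ((s ^^ i) z) ((s ^^ Suc i) z)"
proof -
  define s where "s x = (SOME y. D x y)" for x
  have succ: "D x y \<Longrightarrow> s x = y" for x y
    using assms(1) unfolding s_def right_unique_def by (metis someI)
  have returns: "D\<^sup>+\<^sup>+ ((s ^^ i) z) z" for i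
  proof (induction i)
    case (Suc i)
    then obtain y where "D ((s ^^ i) z) y" "D\<^sup>*\<^sup>* y z"
      by (auto dest: tranclpD)
    then show ?case
      using succ \<open>D\<^sup>+\<^sup>+ z z\<close> by (auto dest: rtranclpD)
  qed (simp add: \<open>D\<^sup>+\<^sup>+ z z\<close>)
  have arc: "D ((s ^^ i) z) ((s ^^ Suc i) z)" for i
    using returns[of i] succ by (auto dest!: tranclpD)
  have "D\<^sup>+\<^sup>+ z y \<Longrightarrow> \<exists>n>0. y = (s ^^ n) z" for y
  proof (induction rule: tranclp_induct)
    case (base y)
    then show ?case using succ by (intro exI[of _ 1]) simp
  next
    case (step y y')
    then obtain n where "n > 0" "y = (s ^^ n) z" by blast
    then show ?case using succ[OF \<open>D y y'\<close>] by (intro exI[of _ "Suc n"]) simp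
  qed
  then have "z \<in> orbit s z"
    using \<open>D\<^sup>+\<^sup>+ z z\<close> by (auto simp: orbit_altdef)
  show thesis
  proof (rule that[of "funpow_dist1 s z z" s])
    show "(s ^^ funpow_dist1 s z z) z = z"
      by (rule funpow_dist1_prop[OF \<open>z \<in> orbit s z\<close>])
    show "inj_on (\<lambda>i. (s ^^ i) z) {0..<funpow_dist1 s z z}"
      by (rule inj_on_funpow_dist1[OF \<open>z \<in> orbit s z\<close>])
    show "D ((s ^^ i) z) ((s ^^ Suc i) z)" for i
      by (rule arc)
  qed simp
qed

lemma cycle_if_tranclp_self:
  assumes D: "orientation V E D" "right_unique D" and irrefl: "\<And>x. \<not> E x x"
    and "D\<^sup>+\<^sup>+ z z"
  shows "\<exists>c. is_cycle E c"
proof -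
  obtain s k where "0 < k" and period: "(s ^^ k) z = z" and inj: "inj_on (\<lambda>i. (s ^^ i) z) {0..<k}"
    and arc: "\<And>i. D ((s ^^ i) z) ((s ^^ Suc i) z)"
    using right_unique_closed_walk_periodic[OF D(2) \<open>D\<^sup>+\<^sup>+ z z\<close>] by blast
  have "k \<noteq> 1"
  proof
    assume "k = 1"
    then have "D z z" using period arc[of 0] by simp
    then show False using irrefl orientation_arcD[OF D(1)] by blast
  qed
  moreover have "k \<noteq> 2"
  proof
    assume "k = 2"
    then have "D z (s z)" "D (s z) z" using period arc[of 0] arc[of 1] by (simp_all add: numeral_2_eq_2)
    then show False using orientation_antisym[OF D(1)] by blast
  qed
  ultimately have "k \<ge> 3" using \<open>0 < k\<close> by linarith
  define c where "c = map (\<lambda>i. (s ^^ i) z) [0..<k]"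
  have "c ! ((i + 1) mod k) = (s ^^ Suc i) z" if "i < k" for i
    using that period by (cases "Suc i = k") (auto simp: c_def)
  then have "is_cycle E c"
    using \<open>k \<ge> 3\<close> inj arc orientation_arcD[OF D(1)]
    unfolding is_cycle_def by (auto simp: c_def distinct_map)
  then show ?thesis by blast
qed

text \<open>Vertices reachable from u are linearly ordered by reachability, so of two arcs into x
  from such vertices the earlier one would close a directed cycle.\<close>
lemma right_unique_acyclic_pred_unique:
  assumes D: "right_unique D" and acyclic: "\<And>x. \<not> D\<^sup>+\<^sup>+ x x"
    and "D\<^sup>*\<^sup>* u y" "D\<^sup>*\<^sup>* u z" "D y x" "D z x"
  shows "y = z"
proof -
  have along_walk: "a = b" if "D\<^sup>*\<^sup>* a b" "D a x" "D b x" for a b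
  proof (rule ccontr)
    assume "a \<noteq> b"
    then obtain a' where "D a a'" "D\<^sup>*\<^sup>* a' b"
      using \<open>D\<^sup>*\<^sup>* a b\<close> by (metis converse_rtranclpE)
    then have "a' = x"
      using \<open>D a x\<close> D unfolding right_unique_def by blast
    then have "D\<^sup>+\<^sup>+ x x"
      using \<open>D\<^sup>*\<^sup>* a' b\<close> \<open>D b x\<close> by (metis rtranclp_into_tranclp1)
    then show False using acyclic by blast
  qed
  have "D\<^sup>*\<^sup>* y z \<or> D\<^sup>*\<^sup>* z y"
    by (rule single_valued_confluent[to_pred, OF D assms(3,4)])
  then show ?thesis
    using along_walk assms(5,6) by metis
qed

lemma orientation_reverse_on:
  assumes D: "orientation V E D" and sym: "\<And>x y. E x y \<Longrightarrow> E y x"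
  shows "orientation V E (\<lambda>x y. if x \<in> R \<and> y \<in> R then D y x else D x y)"
  unfolding orientation_def
proof (intro conjI allI impI)
  fix x y assume "if x \<in> R \<and> y \<in> R then D y x else D x y"
  then show "E x y"
    using orientation_arcD[OF D] sym by (auto split: if_splits)
next
  fix x y assume "E x y"
  then have "D x y \<longleftrightarrow> \<not> D y x" "D y x \<longleftrightarrow> \<not> D x y"
    using D sym unfolding orientation_def by blast+
  then show "(if x \<in> R \<and> y \<in> R then D y x else D x y) \<longleftrightarrow>
      \<not> (if y \<in> R \<and> x \<in> R then D x y else D y x)"
    by auto
qed

text \<open>Reversing every arc between vertices reachable from u turns u into a sink.\<close>
lemma right_unique_orientation_with_sink:
  assumes D: "orientation V E D" "right_unique D" and acyclic: "\<And>x. \<not> D\<^sup>+\<^sup>+ x x"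
    and sym: "\<And>x y. E x y \<Longrightarrow> E y x"
  shows "\<exists>D'. orientation V E D' \<and> right_unique D' \<and> (\<forall>y. \<not> D' u y)"
proof -
  define R where "R = {y. D\<^sup>*\<^sup>* u y}"
  define D' where "D' = (\<lambda>x y. if x \<in> R \<and> y \<in> R then D y x else D x y)"
  have closed: "x \<in> R \<Longrightarrow> D x y \<Longrightarrow> y \<in> R" for x y
    unfolding R_def by auto
  have unique_pred: "y = z" if "y \<in> R" "z \<in> R" "D y x" "D z x" for x y z
    using right_unique_acyclic_pred_unique[OF D(2) acyclic _ _ that(3,4)] that(1,2)
    unfolding R_def by blast
  have out_of_R: "y \<in> R \<and> D y x" if "x \<in> R" "D' x y" for x y
    using that closed unfolding D'_def by (auto split: if_splits)
  have "orientation V E D'"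
    unfolding D'_def by (rule orientation_reverse_on[OF D(1) sym])
  moreover have "right_unique D'"
  proof (rule right_uniqueI)
    fix x y z assume "D' x y" "D' x z"
    show "y = z"
    proof (cases "x \<in> R")
      case True
      then show ?thesis
        using out_of_R \<open>D' x y\<close> \<open>D' x z\<close> unique_pred by blast
    next
      case False
      then show ?thesis
        using \<open>D' x y\<close> \<open>D' x z\<close> D(2) unfolding D'_def right_unique_def by auto
    qed
  qed
  moreover have "\<not> D' u y" for y
  proof
    assume "D' u y"
    moreover have "u \<in> R" unfolding R_def by simp
    ultimately have "y \<in> R" "D y u"
      using out_of_R by blast+
    then have "D\<^sup>+\<^sup>+ u u"
      unfolding R_def by (simp add: rtranclp_into_tranclp1)
    then show False using acyclic by blast
  qed
  ultimately show ?thesis by blast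
qed

definition remove_edge :: "('a \<Rightarrow> 'a \<Rightarrow> bool) \<Rightarrow> 'a \<Rightarrow> 'a \<Rightarrow> 'a \<Rightarrow> 'a \<Rightarrow> bool" where
  "remove_edge E u w x y \<longleftrightarrow> E x y \<and> {x, y} \<noteq> {u, w}"

lemma graph_remove_edge: "graph V E \<Longrightarrow> graph V (remove_edge E u w)"
  unfolding graph_def remove_edge_def by (auto simp: insert_commute)

lemma is_cycle_mono: "(\<And>x y. E' x y \<Longrightarrow> E x y) \<Longrightarrow> is_cycle E' c \<Longrightarrow> is_cycle E c"
  unfolding is_cycle_def by auto

lemma orientation_add_arc:
  assumes D: "orientation V (remove_edge E u w) D" and "E u w" "u \<noteq> w"
  shows "orientation V E (\<lambda>x y. D x y \<or> x = u \<and> y = w)"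
  unfolding orientation_def
proof (intro conjI allI impI)
  fix x y assume "D x y \<or> x = u \<and> y = w"
  then show "E x y"
    using orientation_arcD[OF D] \<open>E u w\<close> unfolding remove_edge_def by blast
next
  fix x y assume "E x y"
  show "(D x y \<or> x = u \<and> y = w) \<longleftrightarrow> \<not> (D y x \<or> y = u \<and> x = w)"
  proof (cases "{x, y} = {u, w}")
    case True
    then have "\<not> D x y" "\<not> D y x"
      using orientation_arcD[OF D] unfolding remove_edge_def by (auto simp: insert_commute)
    then show ?thesis
      using True \<open>u \<noteq> w\<close> by (auto simp: doubleton_eq_iff)
  next
    case False
    then have "D x y \<longleftrightarrow> \<not> D y x"
      using D \<open>E x y\<close> unfolding orientation_def remove_edge_def by blast
    then show ?thesis
      using False by auto
  qed
qed

text \<open>If the graph without the edge uw has no cycle, any right-unique orientation of it is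
  acyclic, can be rearranged to make u a sink, and then extended by the arc u \<rightarrow> w.\<close>
lemma right_unique_orientation_add_edge:
  assumes g: "graph V E" and "E u w"
    and no_cycle: "\<nexists>c. is_cycle (remove_edge E u w) c"
    and "orientation V (remove_edge E u w) D" "right_unique D"
  shows "\<exists>D. orientation V E D \<and> right_unique D"
proof -
  let ?E' = "remove_edge E u w"
  have "\<not> D\<^sup>+\<^sup>+ x x" for x
    using cycle_if_tranclp_self[OF assms(4,5) graph_irrefl[OF graph_remove_edge[OF g]]] no_cycle
    by blast
  then obtain D' where D': "orientation V ?E' D'" "right_unique D'" "\<And>y. \<not> D' u y"
    using right_unique_orientation_with_sink[OF assms(4,5) _ graph_sym[OF graph_remove_edge[OF g]]]
    by blast
  have "u \<noteq> w" using \<open>E u w\<close> graph_irrefl[OF g] by blast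
  then have "orientation V E (\<lambda>x y. D' x y \<or> x = u \<and> y = w)"
    by (rule orientation_add_arc[OF D'(1) \<open>E u w\<close>])
  moreover have "right_unique (\<lambda>x y. D' x y \<or> x = u \<and> y = w)"
    using D'(2,3) unfolding right_unique_def by blast
  ultimately show ?thesis by blast
qed

lemma right_unique_orientation_if_no_cycle:
  assumes "graph V E" "\<nexists>c. is_cycle E c"
  shows "\<exists>D. orientation V E D \<and> right_unique D"
  using assms
proof (induction "card (arcs E)" arbitrary: E rule: less_induct)
  case less
  show ?case
  proof (cases "\<exists>u w. E u w")
    case False
    then have "orientation V E (\<lambda>x y. False) \<and> right_unique (\<lambda>x y. False)"
      unfolding orientation_def right_unique_def by auto
    then show ?thesis by blast
  next
    case True
    then obtain u w where "E u w" by blast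
    have "arcs (remove_edge E u w) \<subset> arcs E"
      using \<open>E u w\<close> unfolding remove_edge_def by auto
    then have "card (arcs (remove_edge E u w)) < card (arcs E)"
      by (rule psubset_card_mono[OF finite_arcs[OF less.prems(1)]])
    moreover have no_cycle: "\<nexists>c. is_cycle (remove_edge E u w) c"
      using less.prems(2) is_cycle_mono[of "remove_edge E u w" E] unfolding remove_edge_def by blast
    ultimately obtain D where "orientation V (remove_edge E u w) D" "right_unique D"
      using less.hyps graph_remove_edge[OF less.prems(1)] by blast
    then show ?thesis
      by (rule right_unique_orientation_add_edge[OF less.prems(1) \<open>E u w\<close> no_cycle])
  qed
qed

lemma cycle_edge_in_cycle_edges:
  "i < length c \<Longrightarrow> {c ! i, c ! ((i + 1) mod length c)} \<in> cycle_edges c"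
  unfolding cycle_edges_def by blast

text \<open>Deleting an edge of the unique cycle leaves a graph without cycles.\<close>
lemma right_unique_orientation_if_pseudotree:
  assumes g: "graph V E" and "pseudotree V E"
  shows "\<exists>D. orientation V E D \<and> right_unique D"
proof (cases "\<exists>c. is_cycle E c")
  case False
  then show ?thesis by (rule right_unique_orientation_if_no_cycle[OF g])
next
  case True
  then obtain c where c: "is_cycle E c" by blast
  define u w where "u = c ! 0" and "w = c ! ((0 + 1) mod length c)"
  have "0 < length c"
    using c unfolding is_cycle_def by linarith
  then have "E u w" "{u, w} \<in> cycle_edges c"
    using c cycle_edge_in_cycle_edges unfolding is_cycle_def u_def w_def by blast+
  have no_cycle: "\<nexists>c'. is_cycle (remove_edge E u w) c'"
  proof
    assume "\<exists>c'. is_cycle (remove_edge E u w) c'"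
    then obtain c' where c': "is_cycle (remove_edge E u w) c'" by blast
    then have "cycle_edges c' = cycle_edges c"
      using \<open>pseudotree V E\<close> c is_cycle_mono[of "remove_edge E u w" E]
      unfolding pseudotree_def remove_edge_def by blast
    then have "{u, w} \<in> cycle_edges c'"
      using \<open>{u, w} \<in> cycle_edges c\<close> by simp
    then obtain i where "i < length c'" "{u, w} = {c' ! i, c' ! ((i + 1) mod length c')}"
      unfolding cycle_edges_def by blast
    then show False
      using c' unfolding is_cycle_def remove_edge_def by auto
  qed
  obtain D where "orientation V (remove_edge E u w) D" "right_unique D"
    using right_unique_orientation_if_no_cycle[OF graph_remove_edge[OF g] no_cycle] by blast
  then show ?thesis
    by (rule right_unique_orientation_add_edge[OF g \<open>E u w\<close> no_cycle])
qed

section \<open>Cycles and pseudotrees\<close>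

lemma cycle_nth_inj:
  "is_cycle E c \<Longrightarrow> i < length c \<Longrightarrow> j < length c \<Longrightarrow> c ! i = c ! j \<Longrightarrow> i = j"
  unfolding is_cycle_def by (simp add: nth_eq_iff_index_eq)

lemma cycle_edge_nth_inj:
  assumes c: "is_cycle E c" and "i < length c" "j < length c"
    and eq: "{c ! i, c ! ((i + 1) mod length c)} = {c ! j, c ! ((j + 1) mod length c)}"
  shows "i = j"
proof (rule ccontr)
  let ?k = "length c"
  assume "i \<noteq> j"
  have "?k > 0"
    using \<open>i < ?k\<close> by linarith
  then have mod_less: "(j + 1) mod ?k < ?k" "(i + 1) mod ?k < ?k"
    by simp_all
  have "c ! i \<noteq> c ! j"
    using cycle_nth_inj[OF c] assms(2,3) \<open>i \<noteq> j\<close> by blast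
  then have "c ! i = c ! ((j + 1) mod ?k)" "c ! j = c ! ((i + 1) mod ?k)"
    using eq by (auto simp: doubleton_eq_iff)
  then have i: "i = (j + 1) mod ?k" and j: "j = (i + 1) mod ?k"
    using cycle_nth_inj[OF c \<open>i < ?k\<close> mod_less(1)] cycle_nth_inj[OF c \<open>j < ?k\<close> mod_less(2)]
    by blast+
  have "j = ((j + 1) mod ?k + 1) mod ?k"
    using j unfolding i .
  then have "(j + 2) mod ?k = j"
    using mod_add_left_eq[of "j + 1" ?k 1] by (simp add: numeral_2_eq_2)
  moreover have "?k \<ge> 3" using c unfolding is_cycle_def by blast
  ultimately show False
    using \<open>j < ?k\<close> by (cases "j + 2 < ?k") (auto simp: le_mod_geq)
qed

text \<open>Walking once around the cycle, starting after the deleted edge.\<close>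
lemma rtranclp_remove_cycle_edge:
  assumes c: "is_cycle E c" and "i < length c"
  defines "u \<equiv> c ! i" and "w \<equiv> c ! ((i + 1) mod length c)"
  shows "(remove_edge E u w)\<^sup>*\<^sup>* w u"
proof -
  let ?k = "length c"
  have "?k \<ge> 3" using c unfolding is_cycle_def by blast
  then have "?k > 0" by linarith
  have walk: "(remove_edge E u w)\<^sup>*\<^sup>* w (c ! ((i + 1 + m) mod ?k))" if "m < ?k" for m
    using that
  proof (induction m)
    case 0
    then show ?case by (simp add: w_def)
  next
    case (Suc m)
    define j where "j = (i + 1 + m) mod ?k"
    have "j < ?k" using \<open>?k > 0\<close> unfolding j_def by simp
    have "j \<noteq> i"
    proof
      assume "j = i"
      then show False
        using \<open>i < ?k\<close> Suc.prems unfolding j_def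
        by (cases "i + 1 + m < ?k") (auto simp: le_mod_geq)
    qed
    then have "{c ! j, c ! ((j + 1) mod ?k)} \<noteq> {u, w}"
      using cycle_edge_nth_inj[OF c \<open>j < ?k\<close> \<open>i < ?k\<close>] unfolding u_def w_def by blast
    moreover have "E (c ! j) (c ! ((j + 1) mod ?k))"
      using c \<open>j < ?k\<close> unfolding is_cycle_def by blast
    moreover have "(j + 1) mod ?k = (i + 1 + Suc m) mod ?k"
      unfolding j_def by (simp add: mod_Suc_eq)
    ultimately have "remove_edge E u w (c ! j) (c ! ((i + 1 + Suc m) mod ?k))"
      unfolding remove_edge_def by simp
    moreover have "(remove_edge E u w)\<^sup>*\<^sup>* w (c ! j)"
      using Suc unfolding j_def by simp
    ultimately show ?case by (meson rtranclp.rtrancl_into_rtrancl)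
  qed
  have "i + 1 + (?k - 1) = i + ?k"
    using \<open>?k > 0\<close> by simp
  then have around: "(i + 1 + (?k - 1)) mod ?k = i"
    using \<open>i < ?k\<close> by simp
  have "(remove_edge E u w)\<^sup>*\<^sup>* w (c ! ((i + 1 + (?k - 1)) mod ?k))"
    by (rule walk) (use \<open>?k > 0\<close> in simp)
  then show ?thesis
    unfolding around u_def .
qed

lemma connected_graph_remove_cycle_edge:
  assumes g: "graph V E" and "connected_graph V E" and c: "is_cycle E c" and "i < length c"
  shows "connected_graph V (remove_edge E (c ! i) (c ! ((i + 1) mod length c)))"
proof -
  define u w where "u = c ! i" and "w = c ! ((i + 1) mod length c)"
  have wu: "(remove_edge E u w)\<^sup>*\<^sup>* w u"
    using rtranclp_remove_cycle_edge[OF c \<open>i < length c\<close>] unfolding u_def w_def .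
  have uw: "(remove_edge E u w)\<^sup>*\<^sup>* u w"
    using sympD[OF symp_rtranclp wu] graph_sym[OF graph_remove_edge[OF g]] by (metis sympI)
  have edge: "(remove_edge E u w)\<^sup>*\<^sup>* x y" if "E x y" for x y
  proof (cases "{x, y} = {u, w}")
    case True
    then show ?thesis using wu uw by (auto simp: doubleton_eq_iff)
  next
    case False
    then show ?thesis using \<open>E x y\<close> unfolding remove_edge_def by auto
  qed
  have "(remove_edge E u w)\<^sup>*\<^sup>* x y" if "E\<^sup>*\<^sup>* x y" for x y
    using that by (induction rule: rtranclp_induct) (auto intro: rtranclp_trans edge)
  then have "connected_graph V (remove_edge E u w)"
    using \<open>connected_graph V E\<close> unfolding connected_graph_def by blast
  then show ?thesis unfolding u_def w_def .
qed

lemma card_arcs_remove_edge: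
  assumes g: "graph V E" and "E u w"
  shows "card (arcs (remove_edge E u w)) = card (arcs E) - 2"
proof -
  have "arcs (remove_edge E u w) = arcs E - {(u, w), (w, u)}"
    unfolding remove_edge_def by (auto simp: doubleton_eq_iff)
  moreover have "{(u, w), (w, u)} \<subseteq> arcs E" "u \<noteq> w"
    using \<open>E u w\<close> graph_sym[OF g] graph_irrefl[OF g] by auto
  ultimately show ?thesis
    using finite_arcs[OF g] by (simp add: card_Diff_subset)
qed

lemma card_ge_3_if_cycle:
  assumes g: "graph V E" and c: "is_cycle E c"
  shows "card V \<ge> 3"
proof -
  have "set c \<subseteq> V"
    using c graph_edgeD[OF g] unfolding is_cycle_def by (metis in_set_conv_nth subsetI)
  then have "card (set c) \<le> card V"
    by (rule card_mono[OF graph_finite[OF g]])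
  moreover have "card (set c) \<ge> 3"
    using c unfolding is_cycle_def by (simp add: distinct_card)
  ultimately show ?thesis by linarith
qed

lemma is_cycle_remove_edge:
  assumes "is_cycle E c" "{u, w} \<notin> cycle_edges c"
  shows "is_cycle (remove_edge E u w) c"
proof -
  have "{c ! j, c ! ((j + 1) mod length c)} \<noteq> {u, w}" if "j < length c" for j
    using cycle_edge_in_cycle_edges[OF that] assms(2) by metis
  then show ?thesis
    using assms(1) unfolding is_cycle_def remove_edge_def by blast
qed

text \<open>Deleting an edge of the cycle keeps the graph connected, so it still has at least
  2(|V| - 1) arcs.\<close>
lemma card_arcs_ge_if_cycle:
  assumes g: "graph V E" and con: "connected_graph V E" and c: "is_cycle E c"
  shows "2 * card V \<le> card (arcs E)"
proof -
  have "0 < length c"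
    using c unfolding is_cycle_def by linarith
  define u w where "u = c ! 0" and "w = c ! ((0 + 1) mod length c)"
  have "E u w"
    using c \<open>0 < length c\<close> unfolding is_cycle_def u_def w_def by blast
  have "connected_graph V (remove_edge E u w)"
    using connected_graph_remove_cycle_edge[OF g con c \<open>0 < length c\<close>] unfolding u_def w_def .
  moreover have "card V \<ge> 3"
    by (rule card_ge_3_if_cycle[OF g c])
  then have "V \<noteq> {}" by auto
  ultimately have "2 * (card V - 1) \<le> card (arcs (remove_edge E u w))"
    using card_arcs_ge_if_connected graph_remove_edge[OF g] by blast
  also have "\<dots> = card (arcs E) - 2"
    by (rule card_arcs_remove_edge[OF g \<open>E u w\<close>])
  finally show ?thesis
    using \<open>card V \<ge> 3\<close> by linarith
qed

text \<open>Deleting an edge of c1 that is not on c2 keeps the graph connected and c2 a cycle.\<close>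
lemma card_arcs_ge_if_two_cycles:
  assumes g: "graph V E" and con: "connected_graph V E"
    and c1: "is_cycle E c1" and c2: "is_cycle E c2"
    and e: "e \<in> cycle_edges c1" "e \<notin> cycle_edges c2"
  shows "2 * card V + 2 \<le> card (arcs E)"
proof -
  obtain i where i: "i < length c1" "e = {c1 ! i, c1 ! ((i + 1) mod length c1)}"
    using e(1) unfolding cycle_edges_def by blast
  define u w where "u = c1 ! i" and "w = c1 ! ((i + 1) mod length c1)"
  have "E u w"
    using c1 i(1) unfolding is_cycle_def u_def w_def by blast
  have "connected_graph V (remove_edge E u w)"
    using connected_graph_remove_cycle_edge[OF g con c1 i(1)] unfolding u_def w_def .
  moreover have "is_cycle (remove_edge E u w) c2"
    using is_cycle_remove_edge[OF c2] e(2) i(2) unfolding u_def w_def by blast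
  ultimately have "2 * card V \<le> card (arcs (remove_edge E u w))"
    by (rule card_arcs_ge_if_cycle[OF graph_remove_edge[OF g]])
  also have "\<dots> = card (arcs E) - 2"
    by (rule card_arcs_remove_edge[OF g \<open>E u w\<close>])
  finally show ?thesis
    using card_ge_3_if_cycle[OF g c1] by linarith
qed

lemma pseudotree_if_card_arcs_le:
  assumes "graph V E" "connected_graph V E" "card (arcs E) \<le> 2 * card V"
  shows "pseudotree V E"
  unfolding pseudotree_def
proof (intro conjI allI impI)
  fix c1 c2 assume cycles: "is_cycle E c1 \<and> is_cycle E c2"
  show "cycle_edges c1 = cycle_edges c2"
  proof (rule ccontr)
    assume "cycle_edges c1 \<noteq> cycle_edges c2"
    then obtain e where "e \<in> cycle_edges c1 \<and> e \<notin> cycle_edges c2 \<or> e \<in> cycle_edges c2 \<and> e \<notin> cycle_edges c1"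
      by blast
    then have "2 * card V + 2 \<le> card (arcs E)"
      using card_arcs_ge_if_two_cycles[OF assms(1,2)] cycles by blast
    then show False using assms(3) by linarith
  qed
qed (rule assms(2))

section \<open>Small connected graphs\<close>

lemma connected_graph_edge_leaving:
  assumes "connected_graph V E" "a \<in> V" "a \<in> set xs" "length xs < card V"
  obtains x y where "x \<in> set xs" "y \<notin> set xs" "E x y"
proof -
  have "\<not> V \<subseteq> set xs"
  proof
    assume "V \<subseteq> set xs"
    then have "card V \<le> length xs"
      using card_mono[OF finite_set] card_length order_trans by blast
    then show False using \<open>length xs < card V\<close> by simp
  qed
  then obtain y where "y \<in> V" "y \<notin> set xs" by blast
  then have "E\<^sup>*\<^sup>* a y"
    using assms(1,2) unfolding connected_graph_def by blast
  then show thesis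
    using \<open>y \<notin> set xs\<close> \<open>a \<in> set xs\<close> that by (induction rule: rtranclp_induct) blast+
qed

lemma exists_degree_le_1:
  assumes "graph V E" "card (arcs E) < 2 * card V"
  shows "\<exists>a\<in>V. card {w. E a w} \<le> 1"
proof (rule ccontr)
  assume "\<not> ?thesis"
  then have "(\<Sum>v\<in>V. 2) \<le> (\<Sum>v\<in>V. card {w. E v w})"
    by (intro sum_mono) (auto simp: not_le numeral_2_eq_2 Suc_le_eq)
  then have "2 * card V \<le> (\<Sum>v\<in>V. card {w. E v w})"
    by (simp add: mult.commute)
  then show False
    using assms card_arcs_eq_sum_degree[OF assms(1)] by linarith
qed

lemma neighbours_eq_singleton:
  assumes "graph V E" "card {w. E a w} \<le> 1" "E a b"
  shows "{w. E a w} = {b}"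
  using assms card_le_Suc0_iff_eq[OF finite_neighbours[OF assms(1)]] by auto

lemma neighbours_eq_doubleton:
  assumes "graph V E" "card {w. E v w} \<le> 2" "E v a" "E v b" "a \<noteq> b"
  shows "{w. E v w} = {a, b}"
proof (rule ccontr)
  assume "{w. E v w} \<noteq> {a, b}"
  then obtain c where "E v c" "c \<noteq> a" "c \<noteq> b" using assms(3,4) by blast
  then have "card {a, b, c} \<le> card {w. E v w}"
    using assms(3,4) by (intro card_mono[OF finite_neighbours[OF assms(1)]]) auto
  then show False using assms(2,5) \<open>c \<noteq> a\<close> \<open>c \<noteq> b\<close> by simp
qed

lemma connected_graph_card_2E:
  assumes "graph V E" "connected_graph V E" "card V = 2"
  obtains p q where "V = {p, q}" "p \<noteq> q" "E p q"
proof -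
  obtain p q where pq: "V = {p, q}" "p \<noteq> q"
    using assms(3) by (meson card_2_iff)
  moreover obtain x w where "x \<in> set [p]" "w \<notin> set [p]" "E x w"
    by (rule connected_graph_edge_leaving[OF assms(2), where xs = "[p]"]) (use pq assms(3) in simp_all)
  moreover have "w \<in> V"
    using \<open>E x w\<close> graph_edgeD[OF assms(1)] by blast
  ultimately show thesis using that by auto
qed

lemma card_arcs_connected_card_2:
  assumes "graph V E" "connected_graph V E" "card V = 2"
  shows "card (arcs E) = 2"
proof -
  obtain p q where pq: "V = {p, q}" "p \<noteq> q" "E p q"
    using connected_graph_card_2E[OF assms] .
  then have "arcs E = {(p, q), (q, p)}"
    using graph_edgeD[OF assms(1)] graph_irrefl[OF assms(1)] graph_sym[OF assms(1)] by auto
  then show ?thesis using pq(2) by simp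
qed

lemma graph_iso_K2_iff:
  assumes g: "graph V E" and "connected_graph V E"
  shows "graph_iso V E K2_V K2_E \<longleftrightarrow> card V = 2"
proof
  assume "graph_iso V E K2_V K2_E"
  then show "card V = 2"
    unfolding graph_iso_def K2_V_def by (metis bij_betw_same_card card_2_iff zero_neq_one)
next
  assume "card V = 2"
  then obtain p q where pq: "V = {p, q}" "p \<noteq> q" "E p q"
    using connected_graph_card_2E[OF assms] by blast
  define f where "f x = (if x = p then 0 else 1 :: nat)" for x
  have "bij_betw f V K2_V"
    unfolding bij_betw_def inj_on_def f_def pq K2_V_def using pq(2) by auto
  moreover have "\<forall>x\<in>V. \<forall>y\<in>V. E x y \<longleftrightarrow> K2_E (f x) (f y)"
    using pq graph_sym[OF g] graph_irrefl[OF g] unfolding K2_E_def K2_V_def f_def by auto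
  ultimately show "graph_iso V E K2_V K2_E"
    unfolding graph_iso_def by blast
qed

lemma graph_iso_path_if_enumeration:
  assumes "distinct xs" "set xs = V" "length xs = n"
    and adj: "\<And>i j. i < n \<Longrightarrow> j < n \<Longrightarrow> E (xs ! i) (xs ! j) \<longleftrightarrow> i + 1 = j \<or> j + 1 = i"
  shows "graph_iso V E (path_V n) (path_E n)"
proof -
  have b: "bij_betw ((!) xs) {..<n} V"
    using bij_betw_nth[OF assms(1)] assms(2,3) by simp
  define f where "f = the_inv_into {..<n} ((!) xs)"
  have f: "bij_betw f V {..<n}"
    unfolding f_def by (rule bij_betw_the_inv_into[OF b])
  then have "bij_betw f V (path_V n)"
    unfolding path_V_def lessThan_atLeast0 .
  moreover have "xs ! f x = x" "f x < n" if "x \<in> V" for x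
    using that b f unfolding f_def by (auto simp: f_the_inv_into_f_bij_betw bij_betw_def)
  then have "\<forall>x\<in>V. \<forall>y\<in>V. E x y \<longleftrightarrow> path_E n (f x) (f y)"
    using adj unfolding path_E_def by metis
  ultimately show ?thesis unfolding graph_iso_def by blast
qed

lemma graph_iso_P3I:
  assumes g: "graph V E" and "V = {a, b, c}" "distinct [a, b, c]" "E a b" "E b c" "\<not> E a c"
  shows "graph_iso V E (path_V 3) (path_E 3)"
proof (rule graph_iso_path_if_enumeration[of "[a, b, c]"])
  fix i j :: nat assume "i < 3" "j < 3"
  then show "E ([a, b, c] ! i) ([a, b, c] ! j) \<longleftrightarrow> i + 1 = j \<or> j + 1 = i"
    using assms graph_sym[OF g] graph_irrefl[OF g]
    by (auto simp: less_Suc_eq numeral_eq_Suc)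
qed (use assms in auto)

lemma graph_iso_P4I:
  assumes g: "graph V E" and "V = {a, b, c, d}" "distinct [a, b, c, d]"
    and "E a b" "E b c" "E c d" "\<not> E a c" "\<not> E a d" "\<not> E b d"
  shows "graph_iso V E (path_V 4) (path_E 4)"
proof (rule graph_iso_path_if_enumeration[of "[a, b, c, d]"])
  fix i j :: nat assume "i < 4" "j < 4"
  then show "E ([a, b, c, d] ! i) ([a, b, c, d] ! j) \<longleftrightarrow> i + 1 = j \<or> j + 1 = i"
    using assms graph_sym[OF g] graph_irrefl[OF g]
    by (auto simp: less_Suc_eq numeral_eq_Suc)
qed (use assms in auto)

text \<open>A connected graph with fewer than |V| edges has a vertex a of degree 1; by connectivity
  the edges leaving {a} and then {a, b} continue it to a path a b c.\<close>
lemma path_from_leaf: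
  assumes g: "graph V E" and con: "connected_graph V E"
    and "card (arcs E) < 2 * card V" "card V \<ge> 3"
  obtains a b c where "a \<in> V" "{w. E a w} = {b}" "E b c" "c \<notin> {a, b}"
proof -
  obtain a where "a \<in> V" "card {w. E a w} \<le> 1"
    using exists_degree_le_1[OF g \<open>card (arcs E) < 2 * card V\<close>] by blast
  obtain x b where "x \<in> set [a]" "E x b"
    by (rule connected_graph_edge_leaving[OF con \<open>a \<in> V\<close>, where xs = "[a]"]) (use \<open>card V \<ge> 3\<close> in simp_all)
  then have Na: "{w. E a w} = {b}"
    using neighbours_eq_singleton[OF g \<open>card {w. E a w} \<le> 1\<close>] by simp
  obtain x c where "x \<in> set [a, b]" "c \<notin> set [a, b]" "E x c"
    by (rule connected_graph_edge_leaving[OF con \<open>a \<in> V\<close>, where xs = "[a, b]"]) (use \<open>card V \<ge> 3\<close> in simp_all)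
  then have "E b c" using Na by auto
  then show thesis using that \<open>a \<in> V\<close> Na \<open>c \<notin> set [a, b]\<close> by simp
qed

lemma graph_iso_P3_if_card:
  assumes g: "graph V E" and con: "connected_graph V E"
    and "card V = 3" "card (arcs E) = 4"
  shows "graph_iso V E (path_V 3) (path_E 3) \<and> (\<exists>u v w. E v u \<and> E v w \<and> u \<noteq> w)"
proof -
  obtain a b c where "a \<in> V" and Na: "{w. E a w} = {b}" and "E b c" "c \<notin> {a, b}"
    using path_from_leaf[OF g con] assms(3,4) by auto
  then have "E a b" by blast
  have "distinct [a, b, c]" "\<not> E a c"
    using \<open>E a b\<close> \<open>c \<notin> {a, b}\<close> Na graph_irrefl[OF g] by auto
  moreover have "V = {a, b, c}"
  proof (rule card_subset_eq[OF graph_finite[OF g], symmetric])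
    show "{a, b, c} \<subseteq> V"
      using \<open>E a b\<close> \<open>E b c\<close> graph_edgeD[OF g] by auto
    show "card {a, b, c} = card V"
      using \<open>distinct [a, b, c]\<close> \<open>card V = 3\<close> by simp
  qed
  ultimately have "graph_iso V E (path_V 3) (path_E 3)"
    using graph_iso_P3I[OF g _ _ \<open>E a b\<close> \<open>E b c\<close>] by blast
  moreover have "E b a" using \<open>E a b\<close> graph_sym[OF g] by blast
  ultimately show ?thesis using \<open>E b c\<close> \<open>c \<notin> {a, b}\<close> by blast
qed

lemma graph_iso_P4_if_card:
  assumes g: "graph V E" and con: "connected_graph V E"
    and "card V = 4" "card (arcs E) = 6" and deg: "\<And>v. v \<in> V \<Longrightarrow> card {w. E v w} \<le> 2"
  shows "graph_iso V E (path_V 4) (path_E 4)"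
proof -
  obtain a b c where "a \<in> V" and Na: "{w. E a w} = {b}" and "E b c" "c \<notin> {a, b}"
    using path_from_leaf[OF g con] assms(3,4) by auto
  then have "E a b" "E b a" "b \<in> V"
    using graph_sym[OF g] graph_edgeD[OF g] by blast+
  then have Nb: "{w. E b w} = {a, c}"
    using neighbours_eq_doubleton[OF g deg \<open>E b a\<close> \<open>E b c\<close>] \<open>c \<notin> {a, b}\<close> by blast
  obtain x d where "x \<in> set [a, b, c]" "d \<notin> set [a, b, c]" "E x d"
    by (rule connected_graph_edge_leaving[OF con \<open>a \<in> V\<close>, where xs = "[a, b, c]"]) (use \<open>card V = 4\<close> in simp_all)
  then have "E c d" "d \<notin> {a, b, c}" using Na Nb by auto
  have "distinct [a, b, c, d]" "\<not> E a c" "\<not> E a d" "\<not> E b d"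
    using \<open>E a b\<close> \<open>c \<notin> {a, b}\<close> \<open>d \<notin> {a, b, c}\<close> Na Nb graph_irrefl[OF g] by auto
  moreover have "V = {a, b, c, d}"
  proof (rule card_subset_eq[OF graph_finite[OF g], symmetric])
    show "{a, b, c, d} \<subseteq> V"
      using \<open>E a b\<close> \<open>E c d\<close> \<open>E b c\<close> graph_edgeD[OF g] by auto
    show "card {a, b, c, d} = card V"
      using \<open>distinct [a, b, c, d]\<close> \<open>card V = 4\<close> by simp
  qed
  ultimately show ?thesis
    using graph_iso_P4I[OF g _ _ \<open>E a b\<close> \<open>E b c\<close> \<open>E c d\<close>] by blast
qed

section \<open>Direct products\<close>

lemma graph_dprod: "graph V1 E1 \<Longrightarrow> graph V2 E2 \<Longrightarrow> graph (dprod_V V1 V2) (dprod_E E1 E2)"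
  unfolding graph_def dprod_V_def dprod_E_def by auto

lemma card_arcs_dprod: "card (arcs (dprod_E E1 E2)) = card (arcs E1) * card (arcs E2)"
proof -
  let ?h = "\<lambda>((a, b), (c, d)). ((a, c), (b, d))"
  have "arcs (dprod_E E1 E2) = ?h ` (arcs E1 \<times> arcs E2)"
    unfolding dprod_E_def by (auto simp: image_iff)
  moreover have "inj_on ?h (arcs E1 \<times> arcs E2)"
    by (rule inj_onI) auto
  ultimately show ?thesis
    by (simp add: card_image card_cartesian_product)
qed

lemma triangle_free_on_dprodI:
  "triangle_free_on UNIV E1 \<or> triangle_free_on UNIV E2 \<Longrightarrow> triangle_free_on S (dprod_E E1 E2)"
  unfolding triangle_free_on_def dprod_E_def by blast

lemma triangle_free_on_Un:
  assumes "\<And>x y. x \<in> A \<Longrightarrow> y \<in> A \<Longrightarrow> \<not> E x y" "\<And>x y. x \<in> B \<Longrightarrow> y \<in> B \<Longrightarrow> \<not> E x y"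
  shows "triangle_free_on (A \<union> B) E"
  using assms unfolding triangle_free_on_def by blast

lemma one_perfectly_orientable_if_graph_iso:
  assumes g: "graph V E" and "graph_iso V E W F" and "one_perfectly_orientable W F"
  shows "one_perfectly_orientable V E"
proof -
  obtain f where f: "bij_betw f V W" and iso: "\<And>x y. x \<in> V \<Longrightarrow> y \<in> V \<Longrightarrow> E x y \<longleftrightarrow> F (f x) (f y)"
    using assms(2) unfolding graph_iso_def by blast
  obtain D where D: "one_perfect W F D"
    using assms(3) unfolding one_perfectly_orientable_def by blast
  define D' where "D' x y \<longleftrightarrow> E x y \<and> D (f x) (f y)" for x y
  have "orientation V E D'"
    using D graph_edgeD[OF g] graph_sym[OF g] iso
    unfolding orientation_def one_perfect_def D'_def by metis
  moreover have "E x y" if "v \<in> V" "D' v x" "D' v y" "x \<noteq> y" for v x y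
  proof -
    have "x \<in> V" "y \<in> V" using that(2,3) graph_edgeD[OF g] unfolding D'_def by blast+
    then have "f x \<noteq> f y" using f \<open>x \<noteq> y\<close> unfolding bij_betw_def inj_on_def by blast
    moreover have "f v \<in> W" using f \<open>v \<in> V\<close> unfolding bij_betw_def by blast
    ultimately have "F (f x) (f y)"
      using D that(2,3) unfolding one_perfect_def D'_def by blast
    then show ?thesis using iso \<open>x \<in> V\<close> \<open>y \<in> V\<close> by blast
  qed
  ultimately show ?thesis
    unfolding one_perfectly_orientable_def one_perfect_def by blast
qed

lemma graph_iso_dprod:
  assumes "graph_iso V1 E1 W1 F1" "graph_iso V2 E2 W2 F2"
  shows "graph_iso (dprod_V V1 V2) (dprod_E E1 E2) (dprod_V W1 W2) (dprod_E F1 F2)"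
proof -
  obtain f where "bij_betw f V1 W1" "\<forall>x\<in>V1. \<forall>y\<in>V1. E1 x y \<longleftrightarrow> F1 (f x) (f y)"
    using assms(1) unfolding graph_iso_def by blast
  moreover obtain g where "bij_betw g V2 W2" "\<forall>x\<in>V2. \<forall>y\<in>V2. E2 x y \<longleftrightarrow> F2 (g x) (g y)"
    using assms(2) unfolding graph_iso_def by blast
  ultimately show ?thesis
    unfolding graph_iso_def dprod_V_def dprod_E_def
    by (intro exI[of _ "map_prod f g"]) (auto simp: bij_betw_map_prod)
qed

lemma graph_iso_dprod_swap:
  "graph_iso (dprod_V V1 V2) (dprod_E E1 E2) (dprod_V V2 V1) (dprod_E E2 E1)"
  unfolding graph_iso_def dprod_V_def dprod_E_def
  by (intro exI[of _ prod.swap]) (auto simp: bij_betw_def product_swap)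

lemma one_perfectly_orientable_dprod_swap:
  assumes "graph V1 E1" "graph V2 E2" "one_perfectly_orientable (dprod_V V2 V1) (dprod_E E2 E1)"
  shows "one_perfectly_orientable (dprod_V V1 V2) (dprod_E E1 E2)"
  using one_perfectly_orientable_if_graph_iso[OF graph_dprod[OF assms(1,2)] graph_iso_dprod_swap]
    assms(3) .

lemma one_perfectly_orientable_dprod_if_right_unique:
  assumes g1: "graph V1 E1" and "card V1 \<le> 2" and g2: "graph V2 E2"
    and D: "orientation V2 E2 D" "right_unique D"
  shows "one_perfectly_orientable (dprod_V V1 V2) (dprod_E E1 E2)"
proof -
  define D' where "D' x y \<longleftrightarrow> dprod_E E1 E2 x y \<and> D (snd x) (snd y)" for x y
  have "orientation (dprod_V V1 V2) (dprod_E E1 E2) D'"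
    using D(1) graph_sym[OF g1] graph_sym[OF g2]
    unfolding orientation_def D'_def dprod_E_def by blast
  moreover have "right_unique D'"
  proof (rule right_uniqueI)
    fix v x y assume "D' v x" "D' v y"
    then have "snd x = snd y"
      using D(2) unfolding D'_def right_unique_def by blast
    moreover have "E1 (fst v) (fst x)" "E1 (fst v) (fst y)"
      using \<open>D' v x\<close> \<open>D' v y\<close> unfolding D'_def dprod_E_def by blast+
    then have "fst x = fst y"
      by (rule neighbour_unique_if_card_le_2[OF g1 \<open>card V1 \<le> 2\<close>])
    ultimately show "x = y" by (simp add: prod_eq_iff)
  qed
  ultimately show ?thesis
    unfolding one_perfectly_orientable_def by (blast intro: one_perfect_if_right_unique)
qed

text \<open>With a 2-vertex factor the product is triangle-free, so it has at most as many edges as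
  vertices, i.e. H has at most |V(H)| edges.\<close>
lemma one_perfectly_orientable_dprod_card2_iff:
  assumes g1: "graph V1 E1" and c1: "connected_graph V1 E1" and "card V1 = 2"
    and g2: "graph V2 E2" and c2: "connected_graph V2 E2"
  shows "one_perfectly_orientable (dprod_V V1 V2) (dprod_E E1 E2) \<longleftrightarrow> pseudotree V2 E2"
proof
  assume "one_perfectly_orientable (dprod_V V1 V2) (dprod_E E1 E2)"
  then obtain D where D: "one_perfect (dprod_V V1 V2) (dprod_E E1 E2) D"
    unfolding one_perfectly_orientable_def by blast
  have "triangle_free_on (dprod_V V1 V2) (dprod_E E1 E2)"
    using triangle_free_on_if_card_le_2[OF g1] \<open>card V1 = 2\<close> by (intro triangle_free_on_dprodI) simp
  then have "card (arcs (dprod_E E1 E2)) \<le> 2 * card (dprod_V V1 V2)"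
    by (rule card_arcs_le_if_one_perfect[OF graph_dprod[OF g1 g2] D])
  then have "card (arcs E2) \<le> 2 * card V2"
    using card_arcs_connected_card_2[OF g1 c1 \<open>card V1 = 2\<close>] graph_finite[OF g2] \<open>card V1 = 2\<close>
    by (simp add: card_arcs_dprod dprod_V_def card_cartesian_product)
  then show "pseudotree V2 E2"
    by (rule pseudotree_if_card_arcs_le[OF g2 c2])
next
  assume "pseudotree V2 E2"
  then obtain D where "orientation V2 E2 D" "right_unique D"
    using right_unique_orientation_if_pseudotree[OF g2] by blast
  then show "one_perfectly_orientable (dprod_V V1 V2) (dprod_E E1 E2)"
    using one_perfectly_orientable_dprod_if_right_unique[OF g1 _ g2] \<open>card V1 = 2\<close> by simp
qed

text \<open>The triangular prism (triangles abc and a'b'c', matching aa', bb', cc') has no 1-perfect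
  orientation: a vertex whose matching edge points out of its triangle has no other out-arc,
  and the three arcs of a triangle need at least two tails inside it, so each triangle sends out
  at most one of the three matching edges.\<close>
lemma prism_not_one_perfect:
  assumes "D a b \<longleftrightarrow> \<not> D b a" "D a c \<longleftrightarrow> \<not> D c a" "D b c \<longleftrightarrow> \<not> D c b"
    "D a' b' \<longleftrightarrow> \<not> D b' a'" "D a' c' \<longleftrightarrow> \<not> D c' a'" "D b' c' \<longleftrightarrow> \<not> D c' b'"
    "D a a' \<longleftrightarrow> \<not> D a' a" "D b b' \<longleftrightarrow> \<not> D b' b" "D c c' \<longleftrightarrow> \<not> D c' c"
    and "\<not> (D a b \<and> D a a')" "\<not> (D a c \<and> D a a')" "\<not> (D b a \<and> D b b')"
    "\<not> (D b c \<and> D b b')" "\<not> (D c a \<and> D c c')" "\<not> (D c b \<and> D c c')"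
    "\<not> (D a' b' \<and> D a' a)" "\<not> (D a' c' \<and> D a' a)" "\<not> (D b' a' \<and> D b' b)"
    "\<not> (D b' c' \<and> D b' b)" "\<not> (D c' a' \<and> D c' c)" "\<not> (D c' b' \<and> D c' c)"
  shows False
  using assms by sat

text \<open>Triangles g0 g1 g2 and h0 h1 h2 in the factors yield a prism on the vertices
  (gi, hj) with i + j \<noteq> 2.\<close>
lemma triangle_free_factor_if_one_perfect_dprod:
  assumes g1: "graph V1 E1" and g2: "graph V2 E2"
    and D: "one_perfect (dprod_V V1 V2) (dprod_E E1 E2) D"
  shows "triangle_free_on UNIV E1 \<or> triangle_free_on UNIV E2"
proof (rule ccontr)
  assume "\<not> ?thesis"
  then obtain g0 g1 g2 h0 h1 h2 where t1: "E1 g0 g1" "E1 g1 g2" "E1 g0 g2"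
    and t2: "E2 h0 h1" "E2 h1 h2" "E2 h0 h2"
    unfolding triangle_free_on_def by blast
  have E1: "E1 g1 g0" "E1 g2 g1" "E1 g2 g0" "\<not> E1 g0 g0" "\<not> E1 g1 g1" "\<not> E1 g2 g2"
    and G: "g0 \<noteq> g1" "g1 \<noteq> g2" "g0 \<noteq> g2" "g1 \<noteq> g0" "g2 \<noteq> g1" "g2 \<noteq> g0"
      "g0 \<in> V1" "g1 \<in> V1" "g2 \<in> V1"
    using t1 graph_sym[OF g1] graph_irrefl[OF g1] graph_edgeD[OF g1] by blast+
  have E2: "E2 h1 h0" "E2 h2 h1" "E2 h2 h0" "\<not> E2 h0 h0" "\<not> E2 h1 h1" "\<not> E2 h2 h2"
    and H: "h0 \<noteq> h1" "h1 \<noteq> h2" "h0 \<noteq> h2" "h1 \<noteq> h0" "h2 \<noteq> h1" "h2 \<noteq> h0"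
      "h0 \<in> V2" "h1 \<in> V2" "h2 \<in> V2"
    using t2 graph_sym[OF g2] graph_irrefl[OF g2] graph_edgeD[OF g2] by blast+
  have arc: "D x y \<longleftrightarrow> \<not> D y x" if "dprod_E E1 E2 x y" for x y
    using D that unfolding one_perfect_def orientation_def by blast
  have no_two: "\<not> (D v x \<and> D v y)"
    if "v \<in> dprod_V V1 V2" "x \<noteq> y" "\<not> dprod_E E1 E2 x y" for v x y
    using D that unfolding one_perfect_def by blast
  show False
  proof (rule prism_not_one_perfect[of D "(g0, h0)" "(g1, h2)" "(g2, h1)" "(g2, h2)" "(g0, h1)" "(g1, h0)"])
  qed (rule arc no_two; simp add: dprod_E_def dprod_V_def t1 t2 E1 E2 G H)+
qed

text \<open>If g1 has two distinct neighbours g0 and g2, the set {(g0, h), (g2, h)} \<union> {g1} \<times> N(h) is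
  bipartite, hence triangle-free, and spans all 4 deg(h) arcs between its two parts.\<close>
lemma degree_le_2_if_one_perfect_dprod:
  assumes g1: "graph V1 E1" and g2: "graph V2 E2"
    and D: "one_perfect (dprod_V V1 V2) (dprod_E E1 E2) D"
    and "E1 g1 g0" "E1 g1 g2" "g0 \<noteq> g2" and "h \<in> V2"
  shows "card {w. E2 h w} \<le> 2"
proof -
  define N A B where "N = {w. E2 h w}" and "A = {(g0, h), (g2, h)}" and "B = {g1} \<times> N"
  have "finite N" unfolding N_def by (rule finite_neighbours[OF g2])
  have "g1 \<noteq> g0" "g1 \<noteq> g2"
    using assms(4,5) graph_irrefl[OF g1] by blast+
  then have "A \<inter> B = {}" unfolding A_def B_def by auto
  have "A \<union> B \<subseteq> dprod_V V1 V2"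
    using assms(4,5) \<open>h \<in> V2\<close> graph_edgeD[OF g1] graph_edgeD[OF g2]
    unfolding A_def B_def N_def dprod_V_def by auto
  moreover have "triangle_free_on (A \<union> B) (dprod_E E1 E2)"
    by (rule triangle_free_on_Un)
      (auto simp: A_def B_def dprod_E_def graph_irrefl[OF g1] graph_irrefl[OF g2])
  ultimately have le: "card {(x, y). x \<in> A \<union> B \<and> y \<in> A \<union> B \<and> dprod_E E1 E2 x y}
      \<le> 2 * card (A \<union> B)"
    by (rule card_arcs_within_le_if_one_perfect[OF graph_dprod[OF g1 g2] D])
  have "finite (A \<union> B)"
    using \<open>finite N\<close> unfolding A_def B_def by simp
  then have "finite {(x, y). x \<in> A \<union> B \<and> y \<in> A \<union> B \<and> dprod_E E1 E2 x y}"
    by (rule finite_arcs_within)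
  moreover have "A \<times> B \<union> B \<times> A \<subseteq> {(x, y). x \<in> A \<union> B \<and> y \<in> A \<union> B \<and> dprod_E E1 E2 x y}"
    using assms(4,5) graph_sym[OF g1] graph_sym[OF g2]
    unfolding A_def B_def N_def dprod_E_def by auto
  ultimately have "card (A \<times> B \<union> B \<times> A) \<le> 2 * card (A \<union> B)"
    using le card_mono by (blast intro: order_trans)
  moreover have "finite A" "finite B" "card A = 2" "card B = card N"
    using \<open>finite N\<close> \<open>g0 \<noteq> g2\<close> unfolding A_def B_def by (simp_all add: card_cartesian_product)
  moreover have "A \<times> B \<inter> B \<times> A = {}"
    using \<open>A \<inter> B = {}\<close> by blast
  ultimately have "4 * card N \<le> 2 * (2 + card N)"
    using \<open>A \<inter> B = {}\<close> by (simp add: card_Un_disjoint card_cartesian_product)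
  then show ?thesis unfolding N_def by simp
qed

section \<open>The classification\<close>

lemma arc_count_cases:
  fixes n1 n2 a1 a2 :: nat
  assumes "3 \<le> n1" "n1 \<le> n2" "2 * (n1 - 1) \<le> a1" "2 * (n2 - 1) \<le> a2" "a1 * a2 \<le> 2 * (n1 * n2)"
  shows "n1 = 3 \<and> a1 = 4 \<and> (n2 = 3 \<and> a2 = 4 \<or> n2 = 4 \<and> a2 = 6)"
proof -
  define k1 k2 where "k1 = n1 - 3" and "k2 = n2 - 3"
  have k: "n1 = k1 + 3" "n2 = k2 + 3" "k1 \<le> k2"
    using assms(1,2) unfolding k1_def k2_def by arith+
  have "(2 * (n1 - 1)) * (2 * (n2 - 1)) \<le> a1 * a2"
    using assms(3,4) by (rule mult_le_mono)
  then have "4 * ((k1 + 2) * (k2 + 2)) \<le> 2 * ((k1 + 3) * (k2 + 3))"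
    using assms(5) k by simp
  then have "k1 * k2 + k1 + k2 \<le> 1"
    by (simp add: algebra_simps)
  then have "k1 = 0" "k2 \<le> 1"
    using k(3) by linarith+
  then have n1: "n1 = 3" and "4 \<le> a1" "4 \<le> a2"
    using assms(3,4) k by auto
  then have "4 * a2 \<le> a1 * a2" "a1 * 4 \<le> a1 * a2"
    by simp_all
  show ?thesis
  proof (cases "k2 = 0")
    case True
    then have "a1 * a2 \<le> 18" using assms(5) k n1 by simp
    then show ?thesis
      using True k n1 \<open>4 \<le> a1\<close> \<open>4 \<le> a2\<close> \<open>4 * a2 \<le> a1 * a2\<close> \<open>a1 * 4 \<le> a1 * a2\<close> by linarith
  next
    case False
    then have "n2 = 4" "6 \<le> a2" using \<open>k2 \<le> 1\<close> k assms(4) by auto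
    then have "a1 * 6 \<le> a1 * a2" "a1 * a2 \<le> 24" using assms(5) n1 by simp_all
    then show ?thesis
      using \<open>n2 = 4\<close> n1 \<open>4 \<le> a1\<close> \<open>6 \<le> a2\<close> \<open>4 * a2 \<le> a1 * a2\<close> by linarith
  qed
qed

lemma one_perfectly_orientable_path_dprodI:
  fixes L :: "((nat \<times> nat) \<times> (nat \<times> nat)) list"
  assumes arcs: "\<forall>(x, y)\<in>set L. dprod_E (path_E n) (path_E m) x y"
    and asym: "\<forall>(x, y)\<in>set L. (y, x) \<notin> set L"
    and cover: "\<forall>i<n. \<forall>j<m. \<forall>k<n. \<forall>l<m. (i + 1 = k \<or> k + 1 = i) \<and> (j + 1 = l \<or> l + 1 = j) \<longrightarrow>
                  ((i, j), (k, l)) \<in> set L \<or> ((k, l), (i, j)) \<in> set L"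
    and "distinct (map fst L)"
  shows "one_perfectly_orientable (dprod_V (path_V n) (path_V m)) (dprod_E (path_E n) (path_E m))"
proof -
  let ?D = "\<lambda>x y. (x, y) \<in> set L"
  have "orientation (dprod_V (path_V n) (path_V m)) (dprod_E (path_E n) (path_E m)) ?D"
    unfolding orientation_def
  proof (intro conjI allI impI)
    fix x y assume "(x, y) \<in> set L"
    then show "dprod_E (path_E n) (path_E m) x y" using arcs by blast
  next
    fix x y :: "nat \<times> nat" assume "dprod_E (path_E n) (path_E m) x y"
    then have "(x, y) \<in> set L \<or> (y, x) \<in> set L"
      using cover unfolding dprod_E_def path_E_def by (cases x, cases y) auto
    then show "(x, y) \<in> set L \<longleftrightarrow> (y, x) \<notin> set L"
      using asym by blast
  qed
  moreover have "right_unique ?D"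
    using \<open>distinct (map fst L)\<close> unfolding right_unique_def distinct_map inj_on_def by force
  ultimately show ?thesis
    unfolding one_perfectly_orientable_def by (blast intro: one_perfect_if_right_unique)
qed

lemma one_perfectly_orientable_P3_P3:
  "one_perfectly_orientable (dprod_V (path_V 3) (path_V 3)) (dprod_E (path_E 3) (path_E 3))"
  by (rule one_perfectly_orientable_path_dprodI[where L =
      "[((0,0),(1,1)), ((0,1),(1,0)), ((1,2),(0,1)), ((0,2),(1,1)),
        ((1,0),(2,1)), ((1,1),(2,0)), ((2,2),(1,1)), ((2,1),(1,2))]"])
    (simp_all add: dprod_E_def path_E_def numeral_eq_Suc All_less_Suc)

lemma one_perfectly_orientable_P3_P4:
  "one_perfectly_orientable (dprod_V (path_V 3) (path_V 4)) (dprod_E (path_E 3) (path_E 4))"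
  by (rule one_perfectly_orientable_path_dprodI[where L =
      "[((0,0),(1,1)), ((0,1),(1,0)), ((1,2),(0,1)), ((0,2),(1,1)), ((1,3),(0,2)), ((0,3),(1,2)),
        ((1,0),(2,1)), ((2,0),(1,1)), ((1,1),(2,2)), ((2,1),(1,2)), ((2,3),(1,2)), ((2,2),(1,3))]"])
    (simp_all add: dprod_E_def path_E_def numeral_eq_Suc All_less_Suc)

lemma dprod_factors_if_one_perfect_card_ge_3:
  assumes g1: "graph V1 E1" and c1: "connected_graph V1 E1" and "card V1 \<ge> 3"
    and g2: "graph V2 E2" and c2: "connected_graph V2 E2" and "card V1 \<le> card V2"
    and D: "one_perfect (dprod_V V1 V2) (dprod_E E1 E2) D"
  shows "graph_iso V1 E1 (path_V 3) (path_E 3) \<and>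
    (graph_iso V2 E2 (path_V 4) (path_E 4) \<or> graph_iso V2 E2 (path_V 3) (path_E 3))"
proof -
  have "triangle_free_on (dprod_V V1 V2) (dprod_E E1 E2)"
    by (rule triangle_free_on_dprodI[OF triangle_free_factor_if_one_perfect_dprod[OF g1 g2 D]])
  then have "card (arcs E1) * card (arcs E2) \<le> 2 * (card V1 * card V2)"
    using card_arcs_le_if_one_perfect[OF graph_dprod[OF g1 g2] D]
    by (simp add: card_arcs_dprod dprod_V_def card_cartesian_product)
  moreover have "V1 \<noteq> {}" "V2 \<noteq> {}"
    using \<open>card V1 \<ge> 3\<close> \<open>card V1 \<le> card V2\<close> by auto
  then have "2 * (card V1 - 1) \<le> card (arcs E1)" "2 * (card V2 - 1) \<le> card (arcs E2)"
    using card_arcs_ge_if_connected g1 c1 g2 c2 by blast+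
  ultimately have counts: "card V1 = 3" "card (arcs E1) = 4"
    "card V2 = 3 \<and> card (arcs E2) = 4 \<or> card V2 = 4 \<and> card (arcs E2) = 6"
    using arc_count_cases[OF \<open>card V1 \<ge> 3\<close> \<open>card V1 \<le> card V2\<close>] by blast+
  then obtain u v w where P3: "graph_iso V1 E1 (path_V 3) (path_E 3)" and "E1 v u" "E1 v w" "u \<noteq> w"
    using graph_iso_P3_if_card[OF g1 c1] by blast
  have "card {w. E2 h w} \<le> 2" if "h \<in> V2" for h
    by (rule degree_le_2_if_one_perfect_dprod[OF g1 g2 D \<open>E1 v u\<close> \<open>E1 v w\<close> \<open>u \<noteq> w\<close> that])
  then show ?thesis
    using counts(3) P3 graph_iso_P3_if_card[OF g2 c2] graph_iso_P4_if_card[OF g2 c2] by blast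
qed

lemma dprod_factors_if_one_perfectly_orientable:
  assumes g1: "graph V1 E1" and c1: "connected_graph V1 E1" and "card V1 \<ge> 2"
    and g2: "graph V2 E2" and c2: "connected_graph V2 E2"
    and "card V1 \<le> card V2"
    and opo: "one_perfectly_orientable (dprod_V V1 V2) (dprod_E E1 E2)"
  shows "(graph_iso V1 E1 K2_V K2_E \<and> pseudotree V2 E2) \<or>
    (graph_iso V1 E1 (path_V 3) (path_E 3) \<and> graph_iso V2 E2 (path_V 4) (path_E 4)) \<or>
    (graph_iso V1 E1 (path_V 3) (path_E 3) \<and> graph_iso V2 E2 (path_V 3) (path_E 3))"
proof (cases "card V1 = 2")
  case True
  then show ?thesis
    using graph_iso_K2_iff[OF g1 c1] one_perfectly_orientable_dprod_card2_iff[OF g1 c1 _ g2 c2] opo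
    by blast
next
  case False
  then have "card V1 \<ge> 3" using \<open>card V1 \<ge> 2\<close> by simp
  moreover obtain D where "one_perfect (dprod_V V1 V2) (dprod_E E1 E2) D"
    using opo unfolding one_perfectly_orientable_def by blast
  ultimately show ?thesis
    using dprod_factors_if_one_perfect_card_ge_3[OF g1 c1 _ g2 c2 \<open>card V1 \<le> card V2\<close>] by blast
qed

lemma one_perfectly_orientable_dprod_if_factors:
  assumes g1: "graph V1 E1" and c1: "connected_graph V1 E1"
    and g2: "graph V2 E2" and c2: "connected_graph V2 E2"
    and "(graph_iso V1 E1 K2_V K2_E \<and> pseudotree V2 E2) \<or>
      (graph_iso V1 E1 (path_V 3) (path_E 3) \<and> graph_iso V2 E2 (path_V 4) (path_E 4)) \<or>
      (graph_iso V1 E1 (path_V 3) (path_E 3) \<and> graph_iso V2 E2 (path_V 3) (path_E 3))"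
  shows "one_perfectly_orientable (dprod_V V1 V2) (dprod_E E1 E2)"
  using assms(5)
proof (elim disjE conjE)
  assume "graph_iso V1 E1 K2_V K2_E" "pseudotree V2 E2"
  then show ?thesis
    using one_perfectly_orientable_dprod_card2_iff[OF g1 c1 _ g2 c2] graph_iso_K2_iff[OF g1 c1] by blast
next
  assume "graph_iso V1 E1 (path_V 3) (path_E 3)" "graph_iso V2 E2 (path_V 4) (path_E 4)"
  then show ?thesis
    by (rule one_perfectly_orientable_if_graph_iso[OF graph_dprod[OF g1 g2] graph_iso_dprod
          one_perfectly_orientable_P3_P4])
next
  assume "graph_iso V1 E1 (path_V 3) (path_E 3)" "graph_iso V2 E2 (path_V 3) (path_E 3)"
  then show ?thesis
    by (rule one_perfectly_orientable_if_graph_iso[OF graph_dprod[OF g1 g2] graph_iso_dprod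
          one_perfectly_orientable_P3_P3])
qed

theorem proposition10:
  fixes V1 :: "'a set" and E1 :: "'a \<Rightarrow> 'a \<Rightarrow> bool"
    and V2 :: "'b set" and E2 :: "'b \<Rightarrow> 'b \<Rightarrow> bool"
  assumes "graph V1 E1" and "connected_graph V1 E1" and "card V1 \<ge> 2"
      and "graph V2 E2" and "connected_graph V2 E2" and "card V2 \<ge> 2"
  shows "one_perfectly_orientable (dprod_V V1 V2) (dprod_E E1 E2) \<longleftrightarrow>
     ((graph_iso V1 E1 K2_V K2_E \<and> pseudotree V2 E2) \<or>
      (graph_iso V2 E2 K2_V K2_E \<and> pseudotree V1 E1) \<or>
      (graph_iso V1 E1 (path_V 3) (path_E 3) \<and> graph_iso V2 E2 (path_V 4) (path_E 4)) \<or>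
      (graph_iso V2 E2 (path_V 3) (path_E 3) \<and> graph_iso V1 E1 (path_V 4) (path_E 4)) \<or>
      (graph_iso V1 E1 (path_V 3) (path_E 3) \<and> graph_iso V2 E2 (path_V 3) (path_E 3)))"
    (is "?opo \<longleftrightarrow> ?shapes")
proof
  assume ?opo
  show ?shapes
  proof (cases "card V1 \<le> card V2")
    case True
    then show ?thesis
      using dprod_factors_if_one_perfectly_orientable[OF assms(1-5) True \<open>?opo\<close>] by blast
  next
    case False
    then have "card V2 \<le> card V1" by simp
    then show ?thesis
      using dprod_factors_if_one_perfectly_orientable[OF assms(4-6,1,2)]
        one_perfectly_orientable_dprod_swap[OF assms(4,1) \<open>?opo\<close>] by blast
  qed
next
  assume ?shapes
  then show ?opo
    using one_perfectly_orientable_dprod_if_factors[OF assms(1,2,4,5)]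
      one_perfectly_orientable_dprod_if_factors[OF assms(4,5,1,2)]
      one_perfectly_orientable_dprod_swap[OF assms(1,4)] by blast
qed

end
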